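(* Let $\mu_n$ be the probability measure on the set of $(n,m,d_1,d_2)$-biregular bipartite graphs induced (via the incidence map) by a uniformly random $(d_1,d_2)$-regular hypergraph on $n$ vertices, and let $\mu_n'$ be the uniform measure on the set of all $(n,m,d_1,d_2)$-biregular bipartite graphs. Then $$d_{\mathrm{TV}}(\mu_n,\mu_n')\leq\left(\frac{nd_1}{d_2}\right)^2\left(\frac{4ed_2}{n}\right)^{d_2}.$$
   Context: An $(n,m,d_1,d_2)$-biregular bipartite graph is a simple bipartite graph on $V_1=[n]$, $V_2=[m]$ with all degrees in $V_1$ equal to $d_1$ and in $V_2$ equal to $d_2$, $m=nd_1/d_2$. A $(d_1,d_2)$-regular hypergraph is a hypergraph without repeated hyperedges in which every hyperedge has exactly $d_2$ vertices and every vertex lies in exactly $d_1$ hyperedges; here the vertex set is $[n]$ and the $m=nd_1/d_2$ hyperedges are labeled $e_1,\dots,e_m$; a random one is uniform among all such. The incidence map sends a hypergraph $H$ to the bipartite graph on $V_1=[n]$, $V_2=\{e_1,\dots,e_m\}$ with $i\sim e_j$ iff $i\in e_j$; it is a bijection onto the set of biregular bipartite graphs in which no two vertices of $V_2$ have the same neighborhood. *)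

theory Defs
  imports "HOL-Probability.Probability_Mass_Function" "HOL-Library.FuncSet"
begin

definition biregular :: "nat \<Rightarrow> nat \<Rightarrow> nat \<Rightarrow> nat \<Rightarrow> (nat \<times> nat) set set" where
  "biregular n m d1 d2 =
     {E. E \<subseteq> {0..<n} \<times> {0..<m}
         \<and> (\<forall>i<n. card {j. (i, j) \<in> E} = d1)
         \<and> (\<forall>j<m. card {i. (i, j) \<in> E} = d2)}"

text \<open>(d1,d2)-regular hypergraphs on vertex set {0..<n} with labelled hyperedges
  e_0,...,e_(m-1): each hyperedge a d2-subset of the vertex set, no repeated hyperedges,
  every vertex in exactly d1 hyperedges.\<close>

definition hypergraphs :: "nat \<Rightarrow> nat \<Rightarrow> nat \<Rightarrow> nat \<Rightarrow> (nat \<Rightarrow> nat set) set" where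
  "hypergraphs n m d1 d2 =
     {e \<in> {0..<m} \<rightarrow>\<^sub>E {A. A \<subseteq> {0..<n} \<and> card A = d2}.
        inj_on e {0..<m} \<and> (\<forall>i<n. card {j \<in> {0..<m}. i \<in> e j} = d1)}"

definition incidence :: "nat \<Rightarrow> (nat \<Rightarrow> nat set) \<Rightarrow> (nat \<times> nat) set" where
  "incidence m e = {(i, j). j < m \<and> i \<in> e j}"

definition tv_dist :: "'a pmf \<Rightarrow> 'a pmf \<Rightarrow> real" where
  "tv_dist p q = (SUP A. \<bar>measure_pmf.prob p A - measure_pmf.prob q A\<bar>)"

definition mu_hyp :: "nat \<Rightarrow> nat \<Rightarrow> nat \<Rightarrow> nat \<Rightarrow> (nat \<times> nat) set pmf" where
  "mu_hyp n m d1 d2 = map_pmf (incidence m) (pmf_of_set (hypergraphs n m d1 d2))"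

definition mu_unif :: "nat \<Rightarrow> nat \<Rightarrow> nat \<Rightarrow> nat \<Rightarrow> (nat \<times> nat) set pmf" where
  "mu_unif n m d1 d2 = pmf_of_set (biregular n m d1 d2)"

end

theory Submission
  imports Defs
begin

text \<open>The uniform measure on the image of the incidence map differs from the uniform measure
  on all biregular graphs by at most the fraction of biregular graphs outside the image, and
  such a graph has two vertices j < k of V2 with the same neighbourhood. For a fixed pair
  (j, k) let a(t) be the number of biregular graphs in which j and k have t common
  neighbours. A switching replaces edges (i, k), (i', k') by (i', k), (i, k'), where i is a
  common neighbour of j and k and i' is a neighbour of neither; it lowers t by one. Each graph
  with t + 1 common neighbours admits at least (t + 1) (n - 3 d2) d1 switchings, and each
  graph with t common neighbours arises from at most (d2 - t)^2 d1 of them, so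
  a(t + 1) (t + 1) (n - 3 d2) \<le> a(t) (d2 - t)^2. Iterating gives
  a(d2) \<le> (d2 / (n - 3 d2))^d2 |B| \<le> (4 e d2 / n)^d2 |B|, and there are fewer than m^2 pairs.\<close>

lemma tv_dist_pmf_of_set_subset:
  assumes fin: "finite B" and sub: "B' \<subseteq> B" and ne: "B' \<noteq> {}"
  shows "tv_dist (pmf_of_set B') (pmf_of_set B) \<le> card (B - B') / card B"
  unfolding tv_dist_def
proof (rule cSUP_least)
  fix A
  have finB': "finite B'" using fin sub finite_subset by auto
  define p where "p = real (card B')"
  define q where "q = real (card B)"
  define x where "x = real (card (B' \<inter> A))"
  define y where "y = real (card (B \<inter> A))"
  have p: "p > 0" using finB' ne unfolding p_def by (simp add: card_gt_0_iff)
  have "card B' \<le> card B" using card_mono[OF fin sub] .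
  then have pq: "p \<le> q" and diff: "card (B - B') = q - p"
    unfolding p_def q_def by (simp_all add: card_Diff_subset[OF finB' sub] of_nat_diff)
  have "0 \<le> x" "x \<le> p" unfolding x_def p_def using card_mono[OF finB'] by simp_all
  have "x \<le> y" unfolding x_def y_def using sub fin by (intro of_nat_mono card_mono) auto
  have "card (B \<inter> A) \<le> card ((B' \<inter> A) \<union> (B - B'))"
    using fin finB' by (intro card_mono) auto
  also have "\<dots> \<le> card (B' \<inter> A) + card (B - B')" by (rule card_Un_le)
  finally have "y \<le> x + (q - p)" unfolding x_def y_def using diff by linarith
  have "x / p - y / q \<le> x / p - x / q"
    using \<open>x \<le> y\<close> p pq by (simp add: divide_right_mono)
  also have "\<dots> = x / p * ((q - p) / q)" using p pq by (simp add: field_simps)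
  also have "\<dots> \<le> (q - p) / q" using \<open>0 \<le> x\<close> \<open>x \<le> p\<close> p pq by (intro mult_left_le_one_le) auto
  finally have le1: "x / p - y / q \<le> (q - p) / q" .
  have "x / q \<le> x / p" using \<open>0 \<le> x\<close> p pq by (intro divide_left_mono) auto
  then have "y / q - x / p \<le> (x + (q - p)) / q - x / q"
    using \<open>y \<le> x + (q - p)\<close> p pq by (intro diff_mono divide_right_mono) auto
  also have "\<dots> = (q - p) / q" by (simp add: add_divide_distrib)
  finally have le2: "y / q - x / p \<le> (q - p) / q" .
  have "B \<noteq> {}" using sub ne by blast
  then have "measure_pmf.prob (pmf_of_set B') A = x / p" "measure_pmf.prob (pmf_of_set B) A = y / q"
    using ne fin finB' unfolding x_def y_def p_def q_def by (simp_all add: measure_pmf_of_set)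
  then show "\<bar>measure_pmf.prob (pmf_of_set B') A - measure_pmf.prob (pmf_of_set B) A\<bar>
      \<le> card (B - B') / card B"
    using le1 le2 diff unfolding q_def by simp
qed simp

definition nbhd1 :: "('a \<times> 'b) set \<Rightarrow> 'a \<Rightarrow> 'b set" where
  "nbhd1 E i = {j. (i, j) \<in> E}"

definition nbhd2 :: "('a \<times> 'b) set \<Rightarrow> 'b \<Rightarrow> 'a set" where
  "nbhd2 E j = {i. (i, j) \<in> E}"

lemma biregular_iff:
  "E \<in> biregular n m d1 d2 \<longleftrightarrow> E \<subseteq> {0..<n} \<times> {0..<m}
     \<and> (\<forall>i<n. card (nbhd1 E i) = d1) \<and> (\<forall>j<m. card (nbhd2 E j) = d2)"
  by (simp add: biregular_def nbhd1_def nbhd2_def)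

lemma finite_biregular: "finite (biregular n m d1 d2)"
proof (rule finite_subset)
  show "biregular n m d1 d2 \<subseteq> Pow ({0..<n} \<times> {0..<m})"
    using biregular_iff by blast
qed simp

context
  fixes n m d1 d2 :: nat and E :: "(nat \<times> nat) set"
  assumes E: "E \<in> biregular n m d1 d2"
begin

lemma biregular_subset: "E \<subseteq> {0..<n} \<times> {0..<m}"
  using E by (simp add: biregular_iff)

lemma biregular_finite: "finite E"
  using biregular_subset by (rule finite_subset) simp

lemma nbhd1_subset: "nbhd1 E i \<subseteq> {0..<m}"
  using biregular_subset by (auto simp: nbhd1_def)

lemma nbhd2_subset: "nbhd2 E j \<subseteq> {0..<n}"
  using biregular_subset by (auto simp: nbhd2_def)

lemma finite_nbhd1: "finite (nbhd1 E i)"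
  using nbhd1_subset by (rule finite_subset) simp

lemma finite_nbhd2: "finite (nbhd2 E j)"
  using nbhd2_subset by (rule finite_subset) simp

lemma card_nbhd1: "i < n \<Longrightarrow> card (nbhd1 E i) = d1"
  using E by (simp add: biregular_iff)

lemma card_nbhd2: "j < m \<Longrightarrow> card (nbhd2 E j) = d2"
  using E by (simp add: biregular_iff)

lemma card_edges_from:
  assumes "X \<subseteq> {0..<n}"
  shows "card (E \<inter> X \<times> UNIV) = card X * d1"
proof -
  have "E \<inter> X \<times> UNIV = Sigma X (nbhd1 E)" by (auto simp: nbhd1_def)
  moreover have "finite X" using assms by (rule finite_subset) simp
  ultimately show ?thesis using assms card_nbhd1 finite_nbhd1 by (auto simp: subset_iff)
qed

lemma card_edges_to:
  assumes "Y \<subseteq> {0..<m}"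
  shows "card (E \<inter> UNIV \<times> Y) = card Y * d2"
proof -
  have "E \<inter> UNIV \<times> Y = prod.swap ` Sigma Y (nbhd2 E)" by (auto simp: nbhd2_def)
  moreover have "finite Y" using assms by (rule finite_subset) simp
  ultimately show ?thesis using assms card_nbhd2 finite_nbhd2
    by (auto simp: card_image subset_iff)
qed

lemma card_biregular_edges: "card E = n * d1"
proof -
  have "E \<inter> {0..<n} \<times> UNIV = E" using biregular_subset by blast
  then show ?thesis using card_edges_from[of "{0..<n}"] by simp
qed

end

definition switch :: "('a \<times> 'b) set \<Rightarrow> 'a \<Rightarrow> 'a \<Rightarrow> 'b \<Rightarrow> 'b \<Rightarrow> ('a \<times> 'b) set" where
  "switch E i i' k k' = insert (i', k) (insert (i, k') (E - {(i, k), (i', k')}))"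

context
  fixes E :: "('a \<times> 'b) set" and i i' :: 'a and k k' :: 'b
  assumes edges: "(i, k) \<in> E" "(i', k') \<in> E" and non_edges: "(i', k) \<notin> E" "(i, k') \<notin> E"
begin

lemma switch_distinct: "i \<noteq> i'" "k \<noteq> k'"
  using edges non_edges by auto

lemma switch_switch: "switch (switch E i i' k k') i' i k k' = E"
  using edges non_edges by (auto simp: switch_def)

lemma nbhd1_switch:
  "nbhd1 (switch E i i' k k') x =
     (if x = i then insert k' (nbhd1 E i - {k})
      else if x = i' then insert k (nbhd1 E i' - {k'}) else nbhd1 E x)"
  using switch_distinct by (auto simp: switch_def nbhd1_def)

lemma nbhd2_switch:
  "nbhd2 (switch E i i' k k') y =
     (if y = k then insert i' (nbhd2 E k - {i})
      else if y = k' then insert i (nbhd2 E k' - {i'}) else nbhd2 E y)"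
  using switch_distinct by (auto simp: switch_def nbhd2_def)

end

lemma switch_biregular:
  assumes E: "E \<in> biregular n m d1 d2"
    and edges: "(i, k) \<in> E" "(i', k') \<in> E" and non_edges: "(i', k) \<notin> E" "(i, k') \<notin> E"
  shows "switch E i i' k k' \<in> biregular n m d1 d2"
proof -
  have sub: "switch E i i' k k' \<subseteq> {0..<n} \<times> {0..<m}"
    using biregular_subset[OF E] edges by (auto simp: switch_def)
  have mem: "k \<in> nbhd1 E i" "k' \<notin> nbhd1 E i" "k' \<in> nbhd1 E i'" "k \<notin> nbhd1 E i'"
    "i \<in> nbhd2 E k" "i' \<notin> nbhd2 E k" "i' \<in> nbhd2 E k'" "i \<notin> nbhd2 E k'"
    using edges non_edges by (simp_all add: nbhd1_def nbhd2_def)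
  moreover have "0 < card (nbhd1 E i)" "0 < card (nbhd1 E i')"
    "0 < card (nbhd2 E k)" "0 < card (nbhd2 E k')"
    using mem finite_nbhd1[OF E] finite_nbhd2[OF E] by (auto simp: card_gt_0_iff)
  ultimately have "\<forall>x<n. card (nbhd1 (switch E i i' k k') x) = d1"
    and "\<forall>y<m. card (nbhd2 (switch E i i' k k') y) = d2"
    using card_nbhd1[OF E] card_nbhd2[OF E] finite_nbhd1[OF E] finite_nbhd2[OF E]
    by (auto simp: nbhd1_switch[OF edges non_edges] nbhd2_switch[OF edges non_edges])
  with sub show ?thesis by (simp add: biregular_iff)
qed

text \<open>If n \<ge> 4 d then n - 3 d \<ge> n / 4; otherwise the power on the right is at least 1.\<close>

lemma real_le_mult_4e_power:
  fixes a b n d :: nat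
  assumes "a \<le> b" and scaled: "a * (n - 3 * d) ^ d \<le> b * d ^ d" and "n > 0"
  shows "real a \<le> real b * (4 * exp 1 * real d / real n) ^ d"
proof -
  have e: "1 \<le> exp (1::real)" by simp
  show ?thesis
  proof (cases "4 * d \<le> n")
    case True
    define c where "c = n - 3 * d"
    have c: "c > 0" "real n \<le> 4 * real c" using True \<open>n > 0\<close> by (auto simp: c_def)
    have "real a * real c ^ d \<le> real b * real d ^ d"
      using scaled unfolding c_def by (metis of_nat_le_iff of_nat_mult of_nat_power)
    then have "real a \<le> real b * (real d / real c) ^ d"
      using c by (simp add: field_simps power_divide)
    also have "\<dots> \<le> real b * (4 * exp 1 * real d / real n) ^ d"
    proof (intro mult_left_mono power_mono)
      have "4 * real c \<le> 4 * exp 1 * real c" using e by (simp add: mult_le_cancel_right1)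
      with c have "real n \<le> 4 * exp 1 * real c" by linarith
      then have "real n * real d \<le> (4 * exp 1 * real c) * real d"
        by (rule mult_right_mono) simp
      then show "real d / real c \<le> 4 * exp 1 * real d / real n"
        using c \<open>n > 0\<close> by (simp add: field_simps)
    qed auto
    finally show ?thesis .
  next
    case False
    then have "real n \<le> 4 * real d" by simp
    also have "\<dots> \<le> 4 * exp 1 * real d" using e by (simp add: mult_le_cancel_right1)
    finally have "1 \<le> (4 * exp 1 * real d / real n) ^ d"
      using \<open>n > 0\<close> by (intro one_le_power) simp
    then have "real b \<le> real b * (4 * exp 1 * real d / real n) ^ d"
      by (simp add: mult_le_cancel_left1)
    then show ?thesis using \<open>a \<le> b\<close> by linarith
  qed
qed

definition twins :: "nat \<Rightarrow> nat \<Rightarrow> nat \<Rightarrow> nat \<Rightarrow> nat \<Rightarrow> nat \<Rightarrow> (nat \<times> nat) set set" where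
  "twins n m d1 d2 j k = {E \<in> biregular n m d1 d2. nbhd2 E j = nbhd2 E k}"

locale right_vertex_pair =
  fixes n m d1 d2 j k :: nat
  assumes j_less: "j < m" and k_less: "k < m" and j_neq_k: "j \<noteq> k"
begin

definition overlap :: "nat \<Rightarrow> (nat \<times> nat) set set" where
  "overlap t = {E \<in> biregular n m d1 d2. card (nbhd2 E j \<inter> nbhd2 E k) = t}"

definition switch_partners :: "(nat \<times> nat) set \<Rightarrow> nat \<Rightarrow> (nat \<times> nat) set" where
  "switch_partners E i = E \<inter> (- (nbhd2 E j \<union> nbhd2 E k)) \<times> (- nbhd1 E i)"

definition switchings :: "nat \<Rightarrow> ((nat \<times> nat) set \<times> nat \<times> nat \<times> nat) set" where
  "switchings t = (SIGMA E:overlap t. SIGMA i:nbhd2 E j \<inter> nbhd2 E k. switch_partners E i)"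

definition reverse_switchings :: "nat \<Rightarrow> ((nat \<times> nat) set \<times> nat \<times> nat \<times> nat) set" where
  "reverse_switchings t =
     (SIGMA H:overlap t. SIGMA i:nbhd2 H j - nbhd2 H k. (nbhd2 H k - nbhd2 H j) \<times> nbhd1 H i)"

lemma overlap_biregular: "E \<in> overlap t \<Longrightarrow> E \<in> biregular n m d1 d2"
  by (simp add: overlap_def)

lemma finite_overlap: "finite (overlap t)"
  using finite_biregular by (simp add: overlap_def)

lemma card_switch_partners_ge:
  assumes E: "E \<in> biregular n m d1 d2" and i: "i < n"
  shows "(n - 3 * d2) * d1 \<le> card (switch_partners E i)"
proof -
  define U where "U = nbhd2 E j \<union> nbhd2 E k"
  have "card U \<le> card (nbhd2 E j) + card (nbhd2 E k)"
    unfolding U_def by (rule card_Un_le)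
  then have U: "card U \<le> 2 * d2"
    using card_nbhd2[OF E] j_less k_less by simp
  have "E \<subseteq> switch_partners E i \<union> E \<inter> U \<times> UNIV \<union> E \<inter> UNIV \<times> nbhd1 E i"
    by (auto simp: switch_partners_def U_def)
  then have "card E \<le> card (switch_partners E i \<union> E \<inter> U \<times> UNIV \<union> E \<inter> UNIV \<times> nbhd1 E i)"
    using biregular_finite[OF E] by (intro card_mono) (auto simp: switch_partners_def)
  also have "\<dots> \<le> card (switch_partners E i) + card (E \<inter> U \<times> UNIV) + card (E \<inter> UNIV \<times> nbhd1 E i)"
    by (meson card_Un_le add_right_mono order_trans)
  also have "card (E \<inter> U \<times> UNIV) = card U * d1"
    using nbhd2_subset[OF E] by (intro card_edges_from[OF E]) (auto simp: U_def)
  also have "card (E \<inter> UNIV \<times> nbhd1 E i) = d1 * d2"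
    using card_edges_to[OF E nbhd1_subset[OF E]] card_nbhd1[OF E i] by simp
  finally have "n * d1 \<le> card (switch_partners E i) + card U * d1 + d1 * d2"
    using card_biregular_edges[OF E] by simp
  moreover have "card U * d1 \<le> 2 * (d1 * d2)" using U by simp
  ultimately have "n * d1 \<le> card (switch_partners E i) + 3 * (d1 * d2)" by linarith
  then show ?thesis by (simp add: diff_mult_distrib algebra_simps)
qed

lemma card_switchings_ge:
  "card (overlap t) * (t * ((n - 3 * d2) * d1)) \<le> card (switchings t)"
proof -
  have "card (overlap t) * (t * ((n - 3 * d2) * d1)) = (\<Sum>E\<in>overlap t. t * ((n - 3 * d2) * d1))"
    by simp
  also have "\<dots> \<le> (\<Sum>E\<in>overlap t. \<Sum>i\<in>nbhd2 E j \<inter> nbhd2 E k. card (switch_partners E i))"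
  proof (rule sum_mono)
    fix E assume E: "E \<in> overlap t"
    then have "card (nbhd2 E j \<inter> nbhd2 E k) * ((n - 3 * d2) * d1)
        \<le> (\<Sum>i\<in>nbhd2 E j \<inter> nbhd2 E k. card (switch_partners E i))"
      using sum_bounded_below[of "nbhd2 E j \<inter> nbhd2 E k" "(n - 3 * d2) * d1" "\<lambda>i. card (switch_partners E i)"]
        card_switch_partners_ge[OF overlap_biregular[OF E]] nbhd2_subset[OF overlap_biregular[OF E]]
      by (auto simp: subset_iff)
    then show "t * ((n - 3 * d2) * d1) \<le> (\<Sum>i\<in>nbhd2 E j \<inter> nbhd2 E k. card (switch_partners E i))"
      using E by (simp add: overlap_def)
  qed
  also have "\<dots> = card (switchings t)"
    using finite_overlap finite_nbhd2[OF overlap_biregular] biregular_finite[OF overlap_biregular]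
    by (simp add: switchings_def switch_partners_def)
  finally show ?thesis .
qed

lemma card_reverse_switchings:
  "card (reverse_switchings t) = card (overlap t) * ((d2 - t)^2 * d1)"
proof -
  have "card (SIGMA i:nbhd2 H j - nbhd2 H k. (nbhd2 H k - nbhd2 H j) \<times> nbhd1 H i)
      = (d2 - t)^2 * d1" if H: "H \<in> overlap t" for H
  proof -
    have B: "H \<in> biregular n m d1 d2" using H by (rule overlap_biregular)
    have t: "card (nbhd2 H j \<inter> nbhd2 H k) = t" using H by (simp add: overlap_def)
    have "card (nbhd2 H j - nbhd2 H k) = d2 - t" "card (nbhd2 H k - nbhd2 H j) = d2 - t"
      using card_Diff_subset_Int[of "nbhd2 H j" "nbhd2 H k"] card_Diff_subset_Int[of "nbhd2 H k" "nbhd2 H j"]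
        finite_nbhd2[OF B] card_nbhd2[OF B] j_less k_less t
      by (simp_all add: Int_commute)
    moreover have "card (nbhd1 H i) = d1" if "i \<in> nbhd2 H j" for i
      using card_nbhd1[OF B] nbhd2_subset[OF B, of j] that by (simp add: subset_iff)
    ultimately show ?thesis
      using finite_nbhd1[OF B] finite_nbhd2[OF B] by (simp add: card_cartesian_product power2_eq_square)
  qed
  then show ?thesis
    using finite_overlap finite_nbhd1[OF overlap_biregular] finite_nbhd2[OF overlap_biregular]
    by (simp add: reverse_switchings_def)
qed

lemma finite_reverse_switchings: "finite (reverse_switchings t)"
  unfolding reverse_switchings_def
  using finite_overlap finite_nbhd1[OF overlap_biregular] finite_nbhd2[OF overlap_biregular]
  by (intro finite_SigmaI) auto

lemma switchings_edges:
  assumes "(E, i, i', k') \<in> switchings t"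
  shows "(i, k) \<in> E" "(i', k') \<in> E" "(i', k) \<notin> E" "(i, k') \<notin> E"
  using assms by (auto simp: switchings_def switch_partners_def nbhd1_def nbhd2_def)

lemma switch_in_reverse_switchings:
  assumes S: "(E, i, i', k') \<in> switchings (Suc t)"
  shows "(switch E i i' k k', i, i', k') \<in> reverse_switchings t"
proof -
  note edges = switchings_edges[OF S]
  have E: "E \<in> biregular n m d1 d2" and t: "card (nbhd2 E j \<inter> nbhd2 E k) = Suc t"
    and i: "i \<in> nbhd2 E j" and i': "i' \<notin> nbhd2 E j"
    using S by (auto simp: switchings_def switch_partners_def overlap_def)
  define H where "H = switch E i i' k k'"
  have "k' \<noteq> j" using edges(2) i' by (auto simp: nbhd2_def)
  then have Hj: "nbhd2 H j = nbhd2 E j" and Hk: "nbhd2 H k = insert i' (nbhd2 E k - {i})"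
    using j_neq_k unfolding H_def nbhd2_switch[OF edges] by auto
  have "nbhd2 H j \<inter> nbhd2 H k = (nbhd2 E j \<inter> nbhd2 E k) - {i}"
    using Hj Hk i' by auto
  moreover have "i \<in> nbhd2 E k" using edges(1) by (simp add: nbhd2_def)
  ultimately have "H \<in> overlap t"
    using t i finite_nbhd2[OF E] switch_biregular[OF E edges] by (simp add: overlap_def H_def)
  moreover have "i \<in> nbhd2 H j - nbhd2 H k" "i' \<in> nbhd2 H k - nbhd2 H j"
    using Hj Hk i i' switch_distinct[OF edges] by auto
  moreover have "k' \<in> nbhd1 H i"
    unfolding H_def nbhd1_switch[OF edges] by simp
  ultimately show ?thesis by (simp add: reverse_switchings_def H_def)
qed

lemma inj_on_switch: "inj_on (\<lambda>(E, i, i', k'). (switch E i i' k k', i, i', k')) (switchings t)"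
proof (rule inj_on_inverseI)
  fix x assume "x \<in> switchings t"
  then show "(\<lambda>(H, i, i', k'). (switch H i' i k k', i, i', k'))
      ((\<lambda>(E, i, i', k'). (switch E i i' k k', i, i', k')) x) = x"
    using switch_switch[OF switchings_edges] by (cases x) auto
qed

lemma card_overlap_Suc_le:
  assumes "d1 > 0"
  shows "card (overlap (Suc t)) * (Suc t * (n - 3 * d2)) \<le> card (overlap t) * (d2 - t)^2"
proof -
  let ?f = "\<lambda>(E, i, i', k'). (switch E i i' k k', i, i', k')"
  have "card (overlap (Suc t)) * (Suc t * (n - 3 * d2)) * d1 \<le> card (switchings (Suc t))"
    using card_switchings_ge[of "Suc t"] by (simp add: algebra_simps)
  also have "\<dots> = card (?f ` switchings (Suc t))"
    by (rule card_image[OF inj_on_switch, symmetric])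
  also have "\<dots> \<le> card (reverse_switchings t)"
    using finite_reverse_switchings switch_in_reverse_switchings by (intro card_mono) auto
  also have "\<dots> = card (overlap t) * (d2 - t)^2 * d1"
    by (simp add: card_reverse_switchings)
  finally show ?thesis using assms by simp
qed

lemma card_overlap_d2_le:
  assumes "d1 > 0"
  shows "card (overlap d2) * (n - 3 * d2) ^ d2 \<le> card (biregular n m d1 d2) * d2 ^ d2"
proof -
  define c where "c = n - 3 * d2"
  let ?B = "biregular n m d1 d2"
  have falling: "card (overlap t) * fact t * c ^ t \<le> card ?B * (\<Prod>s<t. d2 - s)^2" for t
  proof (induction t)
    case 0
    have "card (overlap 0) \<le> card ?B"
      using finite_biregular by (intro card_mono) (auto simp: overlap_def)
    then show ?case by simp
  next
    case (Suc t)
    have "card (overlap (Suc t)) * fact (Suc t) * c ^ Suc t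
        = card (overlap (Suc t)) * (Suc t * c) * (fact t * c ^ t)"
      by (simp add: algebra_simps)
    also have "\<dots> \<le> card (overlap t) * (d2 - t)^2 * (fact t * c ^ t)"
      using card_overlap_Suc_le[OF assms] unfolding c_def by (rule mult_right_mono) simp
    also have "\<dots> = card (overlap t) * fact t * c ^ t * (d2 - t)^2"
      by (simp add: algebra_simps)
    also have "\<dots> \<le> card ?B * (\<Prod>s<t. d2 - s)^2 * (d2 - t)^2"
      using Suc.IH by (rule mult_right_mono) simp
    also have "\<dots> = card ?B * (\<Prod>s<Suc t. d2 - s)^2"
      by (simp add: power_mult_distrib)
    finally show ?case .
  qed
  have "(\<Prod>s<d2. d2 - s) = fact d2"
    by (metis fact_prod_rev of_nat_id atLeast0LessThan)
  then have "card (overlap d2) * c ^ d2 * fact d2 \<le> card ?B * fact d2 * fact d2"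
    using falling[of d2] by (simp add: power2_eq_square algebra_simps)
  then have "card (overlap d2) * c ^ d2 \<le> card ?B * fact d2"
    by simp
  also have "\<dots> \<le> card ?B * d2 ^ d2"
    using fact_le_power[where 'a=nat, of d2] by simp
  finally show ?thesis by (simp add: c_def)
qed

lemma card_twins_le:
  assumes "d1 > 0" and "n > 0"
  shows "real (card (twins n m d1 d2 j k))
    \<le> real (card (biregular n m d1 d2)) * (4 * exp 1 * real d2 / real n) ^ d2"
proof (rule real_le_mult_4e_power)
  have "twins n m d1 d2 j k \<subseteq> overlap d2"
    using card_nbhd2 j_less k_less by (auto simp: twins_def overlap_def)
  then have "card (twins n m d1 d2 j k) \<le> card (overlap d2)"
    using finite_overlap by (rule card_mono[rotated])
  then show "card (twins n m d1 d2 j k) * (n - 3 * d2) ^ d2 \<le> card (biregular n m d1 d2) * d2 ^ d2"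
    using card_overlap_d2_le[OF assms(1)] by (meson mult_right_mono order_trans zero_le)
  show "card (twins n m d1 d2 j k) \<le> card (biregular n m d1 d2)"
    using finite_biregular by (rule card_mono) (auto simp: twins_def)
qed fact

end

lemma nbhd1_incidence: "nbhd1 (incidence m e) i = {j \<in> {0..<m}. i \<in> e j}"
  by (auto simp: nbhd1_def incidence_def)

lemma nbhd2_incidence: "j < m \<Longrightarrow> nbhd2 (incidence m e) j = e j"
  by (auto simp: nbhd2_def incidence_def)

lemma hypergraph_edge:
  "e \<in> hypergraphs n m d1 d2 \<Longrightarrow> j < m \<Longrightarrow> e j \<subseteq> {0..<n} \<and> card (e j) = d2"
  by (auto simp: hypergraphs_def PiE_iff)

lemma incidence_in_biregular:
  assumes e: "e \<in> hypergraphs n m d1 d2"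
  shows "incidence m e \<in> biregular n m d1 d2"
proof -
  have "incidence m e \<subseteq> {0..<n} \<times> {0..<m}"
    using hypergraph_edge[OF e] by (fastforce simp: incidence_def)
  then show ?thesis
    using hypergraph_edge[OF e] e by (auto simp: biregular_iff nbhd1_incidence nbhd2_incidence hypergraphs_def)
qed

lemma inj_on_incidence: "inj_on (incidence m) (hypergraphs n m d1 d2)"
proof (rule inj_onI)
  fix e e' assume e: "e \<in> hypergraphs n m d1 d2" and e': "e' \<in> hypergraphs n m d1 d2"
    and eq: "incidence m e = incidence m e'"
  show "e = e'"
  proof (rule PiE_ext)
    show "e \<in> {0..<m} \<rightarrow>\<^sub>E {A. A \<subseteq> {0..<n} \<and> card A = d2}"
      "e' \<in> {0..<m} \<rightarrow>\<^sub>E {A. A \<subseteq> {0..<n} \<and> card A = d2}"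
      using e e' by (auto simp: hypergraphs_def)
    show "e j = e' j" if "j \<in> {0..<m}" for j
      using nbhd2_incidence[of j m e] nbhd2_incidence[of j m e'] eq that by simp
  qed
qed

lemma finite_hypergraphs: "finite (hypergraphs n m d1 d2)"
proof (rule finite_subset)
  show "hypergraphs n m d1 d2 \<subseteq> {0..<m} \<rightarrow>\<^sub>E {A. A \<subseteq> {0..<n} \<and> card A = d2}"
    by (auto simp: hypergraphs_def)
  show "finite ({0..<m} \<rightarrow>\<^sub>E {A. A \<subseteq> {0..<n} \<and> card A = d2})"
    by (intro finite_PiE) auto
qed

lemma biregular_in_incidence_image:
  assumes E: "E \<in> biregular n m d1 d2"
    and distinct: "\<And>j k. j < k \<Longrightarrow> k < m \<Longrightarrow> nbhd2 E j \<noteq> nbhd2 E k"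
  shows "E \<in> incidence m ` hypergraphs n m d1 d2"
proof
  define e where "e = restrict (nbhd2 E) {0..<m}"
  show "E = incidence m e"
    using biregular_subset[OF E] by (auto simp: e_def incidence_def nbhd2_def)
  have "e \<in> {0..<m} \<rightarrow>\<^sub>E {A. A \<subseteq> {0..<n} \<and> card A = d2}"
    using nbhd2_subset[OF E] card_nbhd2[OF E] by (auto simp: e_def)
  moreover have "inj_on e {0..<m}"
    using distinct by (auto simp: e_def inj_on_def) (metis linorder_neqE_nat)
  moreover have "{j \<in> {0..<m}. i \<in> e j} = nbhd1 E i" for i
    using biregular_subset[OF E] by (auto simp: e_def nbhd1_def nbhd2_def)
  ultimately show "e \<in> hypergraphs n m d1 d2"
    using card_nbhd1[OF E] by (simp add: hypergraphs_def)
qed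

lemma mu_hyp_eq_pmf_of_set:
  assumes "hypergraphs n m d1 d2 \<noteq> {}"
  shows "mu_hyp n m d1 d2 = pmf_of_set (incidence m ` hypergraphs n m d1 d2)"
  unfolding mu_hyp_def using inj_on_incidence assms finite_hypergraphs by (rule map_pmf_of_set_inj)

lemma card_biregular_diff_incidence_le:
  assumes "d1 > 0" and "d2 > 0" and "m * d2 = n * d1"
  shows "real (card (biregular n m d1 d2 - incidence m ` hypergraphs n m d1 d2))
    \<le> real m ^ 2 * (real (card (biregular n m d1 d2)) * (4 * exp 1 * real d2 / real n) ^ d2)"
proof -
  let ?B = "biregular n m d1 d2"
  let ?bound = "real (card ?B) * (4 * exp 1 * real d2 / real n) ^ d2"
  define P where "P = {(j, k). j < k \<and> k < m}"
  have P: "P \<subseteq> {0..<m} \<times> {0..<m}" by (auto simp: P_def)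
  then have "finite P" by (rule finite_subset) simp
  have "?B - incidence m ` hypergraphs n m d1 d2 \<subseteq> (\<Union>(j, k)\<in>P. twins n m d1 d2 j k)"
    using biregular_in_incidence_image by (fastforce simp: P_def twins_def)
  then have "card (?B - incidence m ` hypergraphs n m d1 d2) \<le> card (\<Union>(j, k)\<in>P. twins n m d1 d2 j k)"
    using \<open>finite P\<close> finite_biregular by (intro card_mono) (auto simp: twins_def)
  also have "\<dots> \<le> (\<Sum>(j, k)\<in>P. card (twins n m d1 d2 j k))"
    using card_UN_le[OF \<open>finite P\<close>] by (simp add: case_prod_beta)
  finally have "real (card (?B - incidence m ` hypergraphs n m d1 d2))
      \<le> (\<Sum>(j, k)\<in>P. real (card (twins n m d1 d2 j k)))"
    by (simp add: case_prod_beta flip: of_nat_sum)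
  also have "\<dots> \<le> (\<Sum>(j, k)\<in>P. ?bound)"
  proof (rule sum_mono, clarify)
    fix j k assume "(j, k) \<in> P"
    then interpret right_vertex_pair n m d1 d2 j k by unfold_locales (auto simp: P_def)
    have "n > 0" using assms k_less by (metis gr0I less_nat_zero_code mult_is_0)
    then show "real (card (twins n m d1 d2 j k)) \<le> ?bound" using card_twins_le assms(1) by blast
  qed
  also have "\<dots> = real (card P) * ?bound" by simp
  also have "\<dots> \<le> real m ^ 2 * ?bound"
    using card_mono[OF _ P] by (intro mult_right_mono) (simp_all add: power2_eq_square flip: of_nat_mult)
  finally show ?thesis .
qed

theorem lemma6p9:
  fixes n m d1 d2 :: nat
  assumes "d1 > 0" and "d2 > 0"
    and "m * d2 = n * d1"
    and "hypergraphs n m d1 d2 \<noteq> {}"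
  shows "tv_dist (mu_hyp n m d1 d2) (mu_unif n m d1 d2)
           \<le> (real n * real d1 / real d2) ^ 2 * (4 * exp 1 * real d2 / real n) ^ d2"
proof -
  let ?B = "biregular n m d1 d2" and ?H = "incidence m ` hypergraphs n m d1 d2"
  have "?H \<subseteq> ?B" "?H \<noteq> {}" using incidence_in_biregular assms(4) by auto
  then have "tv_dist (mu_hyp n m d1 d2) (mu_unif n m d1 d2) \<le> card (?B - ?H) / card ?B"
    unfolding mu_hyp_eq_pmf_of_set[OF assms(4)] mu_unif_def
    by (intro tv_dist_pmf_of_set_subset finite_biregular)
  also have "\<dots> \<le> real m ^ 2 * (4 * exp 1 * real d2 / real n) ^ d2"
  proof -
    have "card ?B > 0" using \<open>?H \<subseteq> ?B\<close> \<open>?H \<noteq> {}\<close> finite_biregular by (auto simp: card_gt_0_iff)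
    then show ?thesis
      using card_biregular_diff_incidence_le[OF assms(1-3)] by (simp add: divide_le_eq algebra_simps)
  qed
  also have "real m = real n * real d1 / real d2"
    using assms(2,3) by (simp add: field_simps flip: of_nat_mult)
  finally show ?thesis .
qed

end
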